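(* Let $p$ be a prime. If $X\subset\mathbb{R}^{k_1}$ and $Y\subset\mathbb{R}^{k_2}$ are Euclidean sub-$p$-toral, then $X\times Y\subset\mathbb{R}^{k_1+k_2}$ is Euclidean sub-$p$-toral.
   Context: A $p$-torus is a group isomorphic to $(\mathbb{Z}_p)^\alpha$ for some $\alpha\ge1$. A set $X\subset\mathbb{R}^k$ is Euclidean sub-$p$-toral if there exist $n\ge k$, a $p$-torus $G$ and an action of $G$ on $\mathbb{R}^n$ by isometries such that $X$ (viewed in $\mathbb{R}^n$ via the standard inclusion $\mathbb{R}^k\subset\mathbb{R}^n$) is contained in a single $G$-orbit. *)

theory Defs
  imports Complex_Main "HOL-Algebra.Group_Action" "HOL-Algebra.Product_Groups"
    "HOL-Algebra.Elementary_Groups" "HOL-Computational_Algebra.Primes"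
begin

text \<open>Euclidean space R^n, realised as real sequences vanishing from index n on.
  With this encoding the standard inclusion R^k \<subseteq> R^n (k \<le> n, padding by zeros)
  is literally set inclusion.\<close>
definition euclid :: "nat \<Rightarrow> (nat \<Rightarrow> real) set" where
  "euclid n = {x. \<forall>i\<ge>n. x i = 0}"

definition edist :: "nat \<Rightarrow> (nat \<Rightarrow> real) \<Rightarrow> (nat \<Rightarrow> real) \<Rightarrow> real" where
  "edist n x y = sqrt (\<Sum>i<n. (x i - y i)^2)"

definition p_torus :: "nat \<Rightarrow> ('g, 'b) monoid_scheme \<Rightarrow> bool" where
  "p_torus p G \<longleftrightarrow> group G \<and>
     (\<exists>\<alpha>\<ge>1. G \<cong> (product_group {..<\<alpha>} (\<lambda>_. integer_mod_group p) :: (nat \<Rightarrow> int) monoid))"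

definition isometric_action ::
  "('g, 'b) monoid_scheme \<Rightarrow> nat \<Rightarrow> ('g \<Rightarrow> (nat \<Rightarrow> real) \<Rightarrow> (nat \<Rightarrow> real)) \<Rightarrow> bool" where
  "isometric_action G n \<phi> \<longleftrightarrow> group_action G (euclid n) \<phi> \<and>
     (\<forall>g\<in>carrier G. \<forall>x\<in>euclid n. \<forall>y\<in>euclid n. edist n (\<phi> g x) (\<phi> g y) = edist n x y)"

text \<open>The group is taken with carrier type
  nat \<Rightarrow> int, which loses nothing: every p-torus is isomorphic to one of this type
  (e.g. the product group itself) and actions transport along isomorphisms.\<close>
definition euclidean_sub_p_toral :: "nat \<Rightarrow> nat \<Rightarrow> (nat \<Rightarrow> real) set \<Rightarrow> bool" where
  "euclidean_sub_p_toral p k X \<longleftrightarrow>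
     (\<exists>n\<ge>k. \<exists>G :: (nat \<Rightarrow> int) monoid. \<exists>\<phi>. p_torus p G \<and> isometric_action G n \<phi> \<and>
        (\<exists>x\<in>euclid n. X \<subseteq> orbit G \<phi> x))"

definition euclid_prod :: "nat \<Rightarrow> (nat \<Rightarrow> real) set \<Rightarrow> (nat \<Rightarrow> real) set \<Rightarrow> (nat \<Rightarrow> real) set" where
  "euclid_prod k1 X Y = {(\<lambda>i. if i < k1 then x i else y (i - k1)) | x y. x \<in> X \<and> y \<in> Y}"

end

theory Submission
  imports Defs
begin

text \<open>If a p-torus G1 acts isometrically on R^n1 with X inside the orbit of x1, and G2
  likewise on R^n2 with Y inside the orbit of x2, then G1 \<times> G2 acts componentwise on
  R^n1 \<times> R^n2, isometrically for the Euclidean metric, and X \<times> Y lies in the orbit of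
  (x1, x2). Since (Z_p)^a \<times> (Z_p)^b \<cong> (Z_p)^(a+b), the acting group is again a p-torus. The only care needed is in identifying R^n1 \<times> R^n2 with
  R^(n1+n2): the coordinates are interleaved so that R^k1 \<times> R^k2 is carried onto the
  standard R^(k1+k2).\<close>

section \<open>Constructing group actions\<close>

lemma group_actionI:
  assumes G: "group G"
    and ext: "\<And>g. g \<in> carrier G \<Longrightarrow> \<phi> g \<in> extensional E"
    and closed: "\<And>g x. g \<in> carrier G \<Longrightarrow> x \<in> E \<Longrightarrow> \<phi> g x \<in> E"
    and one: "\<And>x. x \<in> E \<Longrightarrow> \<phi> \<one>\<^bsub>G\<^esub> x = x"
    and mult: "\<And>g h x. g \<in> carrier G \<Longrightarrow> h \<in> carrier G \<Longrightarrow> x \<in> E \<Longrightarrow>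
                 \<phi> (g \<otimes>\<^bsub>G\<^esub> h) x = \<phi> g (\<phi> h x)"
  shows "group_action G E \<phi>"
proof -
  interpret G: group G by (rule G)
  have bij: "\<phi> g \<in> Bij E" if g: "g \<in> carrier G" for g
  proof -
    have "bij_betw (\<phi> g) E E"
    proof (rule bij_betw_byWitness[where f' = "\<phi> (inv\<^bsub>G\<^esub> g)"])
      show "\<forall>x\<in>E. \<phi> (inv\<^bsub>G\<^esub> g) (\<phi> g x) = x"
        using g by (metis mult G.inv_closed G.l_inv one)
      show "\<forall>x\<in>E. \<phi> g (\<phi> (inv\<^bsub>G\<^esub> g) x) = x"
        using g by (metis mult G.inv_closed G.r_inv one)
    qed (use g closed in auto)
    then show ?thesis using ext g by (simp add: Bij_def)
  qed
  have "\<phi> \<in> hom G (BijGroup E)"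
  proof (rule homI)
    show "\<phi> g \<in> carrier (BijGroup E)" if "g \<in> carrier G" for g
      using bij that by (simp add: BijGroup_def)
    show "\<phi> (g \<otimes>\<^bsub>G\<^esub> h) = \<phi> g \<otimes>\<^bsub>BijGroup E\<^esub> \<phi> h" if "g \<in> carrier G" "h \<in> carrier G" for g h
    proof -
      have "\<phi> (g \<otimes>\<^bsub>G\<^esub> h) = compose E (\<phi> g) (\<phi> h)"
        using that mult ext[of "g \<otimes>\<^bsub>G\<^esub> h"]
        by (auto simp: compose_def extensional_def intro!: ext)
      then show ?thesis using that bij by (simp add: BijGroup_def)
    qed
  qed
  then show ?thesis
    by (simp add: group_action_def group_hom_def group_hom_axioms_def G group_BijGroup)
qed

lemma (in group_action) acting_group: "group G"
  using group_hom group_hom.axioms(1) by blast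

lemma (in group_action) one_acts_trivially: "x \<in> E \<Longrightarrow> \<phi> \<one> x = x"
  using id_eq_one by (metis restrict_apply')

lemma group_action_hom_pullback:
  assumes "group H" and "\<psi> \<in> hom H G" and "group_action G E \<phi>"
  shows "group_action H E (\<phi> \<circ> \<psi>)"
  using assms hom_compose[of \<psi> H G \<phi> "BijGroup E"]
  by (simp add: group_action_def group_hom_def group_hom_axioms_def group_BijGroup)

lemma orbit_hom_pullback:
  assumes "\<psi> ` carrier H = carrier G"
  shows "orbit H (\<phi> \<circ> \<psi>) x = orbit G \<phi> x"
  using assms by (auto simp: orbit_def) (metis imageE)

definition prod_action ::
  "'a set \<Rightarrow> 'b set \<Rightarrow> ('g \<Rightarrow> 'a \<Rightarrow> 'a) \<Rightarrow> ('h \<Rightarrow> 'b \<Rightarrow> 'b) \<Rightarrow> 'g \<times> 'h \<Rightarrow> 'a \<times> 'b \<Rightarrow> 'a \<times> 'b"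
  where "prod_action E1 E2 \<phi>1 \<phi>2 = (\<lambda>(g, h). \<lambda>z\<in>E1 \<times> E2. (\<phi>1 g (fst z), \<phi>2 h (snd z)))"

lemma group_action_prod_action:
  assumes a1: "group_action G1 E1 \<phi>1" and a2: "group_action G2 E2 \<phi>2"
  shows "group_action (G1 \<times>\<times> G2) (E1 \<times> E2) (prod_action E1 E2 \<phi>1 \<phi>2)"
proof -
  interpret A1: group_action G1 E1 \<phi>1 by (rule a1)
  interpret A2: group_action G2 E2 \<phi>2 by (rule a2)
  show ?thesis
  proof (intro group_actionI)
    fix g z assume "g \<in> carrier (G1 \<times>\<times> G2)" "z \<in> E1 \<times> E2"
    then show "prod_action E1 E2 \<phi>1 \<phi>2 g z \<in> E1 \<times> E2"
      by (auto simp: prod_action_def intro: A1.element_image A2.element_image)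
  next
    fix g h z assume "g \<in> carrier (G1 \<times>\<times> G2)" "h \<in> carrier (G1 \<times>\<times> G2)" "z \<in> E1 \<times> E2"
    then show "prod_action E1 E2 \<phi>1 \<phi>2 (g \<otimes>\<^bsub>G1 \<times>\<times> G2\<^esub> h) z =
        prod_action E1 E2 \<phi>1 \<phi>2 g (prod_action E1 E2 \<phi>1 \<phi>2 h z)"
      by (auto simp: prod_action_def A1.composition_rule A2.composition_rule
          intro: A1.element_image A2.element_image)
  qed (auto simp: prod_action_def DirProd_group A1.acting_group A2.acting_group
      A1.one_acts_trivially A2.one_acts_trivially)
qed

lemma orbit_prod_action:
  assumes "x \<in> E1" "y \<in> E2"
  shows "orbit (G1 \<times>\<times> G2) (prod_action E1 E2 \<phi>1 \<phi>2) (x, y) = orbit G1 \<phi>1 x \<times> orbit G2 \<phi>2 y"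
  using assms by (auto simp: orbit_def prod_action_def)

section \<open>Distance-preserving actions and transport along bijections\<close>

definition dist_preserving_action ::
  "('g, 'm) monoid_scheme \<Rightarrow> 'a set \<Rightarrow> ('g \<Rightarrow> 'a \<Rightarrow> 'a) \<Rightarrow> ('a \<Rightarrow> 'a \<Rightarrow> 'd) \<Rightarrow> bool"
  where "dist_preserving_action G E \<phi> d \<longleftrightarrow>
    (\<forall>g\<in>carrier G. \<forall>x\<in>E. \<forall>y\<in>E. d (\<phi> g x) (\<phi> g y) = d x y)"

lemma isometric_action_iff:
  "isometric_action G n \<phi> \<longleftrightarrow>
     group_action G (euclid n) \<phi> \<and> dist_preserving_action G (euclid n) \<phi> (edist n)"
  by (simp add: isometric_action_def dist_preserving_action_def)

lemma dist_preserving_hom_pullback: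
  assumes "\<psi> \<in> hom H G" and "dist_preserving_action G E \<phi> d"
  shows "dist_preserving_action H E (\<phi> \<circ> \<psi>) d"
  using assms by (simp add: dist_preserving_action_def hom_in_carrier)

definition prod_dist :: "('a \<Rightarrow> 'a \<Rightarrow> real) \<Rightarrow> ('b \<Rightarrow> 'b \<Rightarrow> real) \<Rightarrow> 'a \<times> 'b \<Rightarrow> 'a \<times> 'b \<Rightarrow> real"
  where "prod_dist d1 d2 = (\<lambda>(x, y) (x', y'). sqrt ((d1 x x')\<^sup>2 + (d2 y y')\<^sup>2))"

lemma dist_preserving_prod_action:
  assumes "dist_preserving_action G1 E1 \<phi>1 d1" and "dist_preserving_action G2 E2 \<phi>2 d2"
  shows "dist_preserving_action (G1 \<times>\<times> G2) (E1 \<times> E2) (prod_action E1 E2 \<phi>1 \<phi>2) (prod_dist d1 d2)"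
  using assms by (auto simp: dist_preserving_action_def prod_action_def prod_dist_def)

definition transport_action ::
  "('a \<Rightarrow> 'b) \<Rightarrow> ('b \<Rightarrow> 'a) \<Rightarrow> 'b set \<Rightarrow> ('g \<Rightarrow> 'a \<Rightarrow> 'a) \<Rightarrow> 'g \<Rightarrow> 'b \<Rightarrow> 'b"
  where "transport_action f f' B \<phi> = (\<lambda>g. \<lambda>y\<in>B. f (\<phi> g (f' y)))"

context
  fixes A :: "'a set" and B :: "'b set" and f :: "'a \<Rightarrow> 'b" and f' :: "'b \<Rightarrow> 'a"
  assumes f_in: "\<And>x. x \<in> A \<Longrightarrow> f x \<in> B" and f'_in: "\<And>y. y \<in> B \<Longrightarrow> f' y \<in> A"
    and f'_f: "\<And>x. x \<in> A \<Longrightarrow> f' (f x) = x" and f_f': "\<And>y. y \<in> B \<Longrightarrow> f (f' y) = y"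
begin

lemma group_action_transport:
  assumes "group_action G A \<phi>"
  shows "group_action G B (transport_action f f' B \<phi>)"
proof -
  interpret group_action G A \<phi> by (rule assms)
  show ?thesis
  proof (intro group_actionI)
    fix g y assume "g \<in> carrier G" "y \<in> B"
    then have "\<phi> g (f' y) \<in> A" using f'_in element_image by blast
    with \<open>y \<in> B\<close> show "transport_action f f' B \<phi> g y \<in> B"
      by (simp add: transport_action_def f_in)
  next
    fix g h y assume "g \<in> carrier G" "h \<in> carrier G" "y \<in> B"
    moreover have "\<phi> h (f' y) \<in> A" using calculation f'_in element_image by blast
    ultimately show "transport_action f f' B \<phi> (g \<otimes>\<^bsub>G\<^esub> h) y =
        transport_action f f' B \<phi> g (transport_action f f' B \<phi> h y)"
      by (simp add: transport_action_def f_in f'_in f'_f composition_rule)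
  qed (simp_all add: transport_action_def acting_group one_acts_trivially f'_in f_f')
qed

lemma orbit_transport:
  assumes "x \<in> A"
  shows "orbit G (transport_action f f' B \<phi>) (f x) = f ` orbit G \<phi> x"
  using assms by (auto simp: orbit_def transport_action_def f_in f'_f)

lemma dist_preserving_transport:
  assumes "group_action G A \<phi>" and "dist_preserving_action G A \<phi> dA"
    and f_isometry: "\<And>x y. x \<in> A \<Longrightarrow> y \<in> A \<Longrightarrow> dB (f x) (f y) = dA x y"
  shows "dist_preserving_action G B (transport_action f f' B \<phi>) dB"
  unfolding dist_preserving_action_def
proof (intro ballI)
  interpret group_action G A \<phi> by (rule assms(1))
  fix g y z assume g: "g \<in> carrier G" and y: "y \<in> B" and z: "z \<in> B"
  have "\<phi> g (f' y) \<in> A" "\<phi> g (f' z) \<in> A"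
    using g y z f'_in element_image by blast+
  then have "dB (transport_action f f' B \<phi> g y) (transport_action f f' B \<phi> g z)
      = dA (\<phi> g (f' y)) (\<phi> g (f' z))"
    using y z by (simp add: transport_action_def f_isometry)
  also have "\<dots> = dA (f' y) (f' z)"
    using assms(2) g y z f'_in by (simp add: dist_preserving_action_def)
  also have "\<dots> = dB y z"
    using y z by (simp add: f_isometry[symmetric] f'_in f_f')
  finally show "dB (transport_action f f' B \<phi> g y) (transport_action f f' B \<phi> g z) = dB y z" .
qed

end

section \<open>Products of p-tori\<close>

lemma product_group_split_iso:
  fixes m n :: nat
  defines "sep \<equiv> \<lambda>g. (restrict g {..<m}, \<lambda>i\<in>{..<n}. g (i + m))"
  shows "sep \<in> iso (product_group {..<m + n} G)
      (product_group {..<m} G \<times>\<times> product_group {..<n} (\<lambda>i. G (i + m)))"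
proof (rule isoI)
  show "sep \<in> hom (product_group {..<m + n} G)
      (product_group {..<m} G \<times>\<times> product_group {..<n} (\<lambda>i. G (i + m)))"
    unfolding sep_def by (rule homI) (auto simp: PiE_iff Ball_def intro!: ext)
  let ?join = "\<lambda>(c, d). \<lambda>i\<in>{..<m + n}. if i < m then c i else d (i - m)"
  show "bij_betw sep (carrier (product_group {..<m + n} G))
      (carrier (product_group {..<m} G \<times>\<times> product_group {..<n} (\<lambda>i. G (i + m))))"
  proof (rule bij_betw_byWitness[where f' = ?join]; intro ballI subsetI)
    fix g assume "g \<in> carrier (product_group {..<m + n} G)"
    then have g: "g \<in> (\<Pi>\<^sub>E i\<in>{..<m + n}. carrier (G i))" by simp
    show "?join (sep g) = g"
    proof (rule ext)
      fix i show "?join (sep g) i = g i"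
        by (cases "i < m + n") (simp_all add: sep_def PiE_arb[OF g])
    qed
  next
    fix z assume "z \<in> carrier (product_group {..<m} G \<times>\<times> product_group {..<n} (\<lambda>i. G (i + m)))"
    then show "sep (?join z) = z"
      by (auto simp: sep_def PiE_iff extensional_def intro!: ext)
  next
    fix z assume "z \<in> sep ` carrier (product_group {..<m + n} G)"
    then obtain g where "g \<in> (\<Pi>\<^sub>E i\<in>{..<m + n}. carrier (G i))" "z = sep g"
      by auto
    then show "z \<in> carrier (product_group {..<m} G \<times>\<times> product_group {..<n} (\<lambda>i. G (i + m)))"
      by (simp add: sep_def PiE_iff)
  next
    fix g assume "g \<in> ?join ` carrier (product_group {..<m} G \<times>\<times> product_group {..<n} (\<lambda>i. G (i + m)))"
    then obtain c d where c: "c \<in> (\<Pi>\<^sub>E i\<in>{..<m}. carrier (G i))"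
      and d: "d \<in> (\<Pi>\<^sub>E i\<in>{..<n}. carrier (G (i + m)))" and "g = ?join (c, d)"
      by auto
    moreover have "?join (c, d) i \<in> carrier (G i)" if "i < m + n" for i
      using that PiE_mem[OF c, of i] PiE_mem[OF d, of "i - m"] by auto
    ultimately show "g \<in> carrier (product_group {..<m + n} G)"
      by (auto simp: PiE_iff simp del: split_paired_All)
  qed
qed

lemma p_torus_power:
  fixes \<alpha> :: nat
  assumes "\<alpha> \<ge> 1"
  shows "p_torus p (product_group {..<\<alpha>} (\<lambda>_. integer_mod_group p))"
  unfolding p_torus_def using assms by (intro conjI exI[of _ \<alpha>]) simp_all

lemma p_torus_DirProd_iso:
  assumes "p_torus p G1" and "p_torus p G2"
  obtains \<alpha> :: nat and \<psi> where "\<alpha> \<ge> 1"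
    and "\<psi> \<in> iso (product_group {..<\<alpha>} (\<lambda>_. integer_mod_group p)) (G1 \<times>\<times> G2)"
proof -
  let ?Z = "\<lambda>\<alpha>::nat. product_group {..<\<alpha>} (\<lambda>_. integer_mod_group p)"
  obtain a1 a2 where "a1 \<ge> 1" and "G1 \<cong> ?Z a1" and "G2 \<cong> ?Z a2"
    using assms unfolding p_torus_def by blast
  moreover from calculation have "?Z a1 \<times>\<times> ?Z a2 \<cong> G1 \<times>\<times> G2"
    using assms by (simp add: p_torus_def group.DirProd_iso_trans group.iso_sym)
  with product_group_split_iso[THEN is_isoI] have "?Z (a1 + a2) \<cong> G1 \<times>\<times> G2"
    by (rule iso_trans)
  ultimately show ?thesis
    using that[of "a1 + a2"] unfolding is_iso_def by auto
qed

section \<open>Interleaving coordinates\<close>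

text \<open>\<open>interleave k1 k2 n1 (a, b)\<close> lists the first k1 coordinates of a, then the first
  k2 of b, then the remaining ones of a and of b; for a in R^k1 and b in R^k2 this is the
  concatenation used in \<open>euclid_prod\<close>.\<close>

definition interleave :: "nat \<Rightarrow> nat \<Rightarrow> nat \<Rightarrow> (nat \<Rightarrow> 'a) \<times> (nat \<Rightarrow> 'a) \<Rightarrow> nat \<Rightarrow> 'a"
  where "interleave k1 k2 n1 = (\<lambda>(a, b) i.
    if i < k1 then a i else if i < k1 + k2 then b (i - k1)
    else if i < n1 + k2 then a (i - k2) else b (i - n1))"

definition deinterleave :: "nat \<Rightarrow> nat \<Rightarrow> nat \<Rightarrow> nat \<Rightarrow> (nat \<Rightarrow> 'a::zero) \<Rightarrow> (nat \<Rightarrow> 'a) \<times> (nat \<Rightarrow> 'a)"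
  where "deinterleave k1 k2 n1 n2 z =
    (\<lambda>j. if j < k1 then z j else if j < n1 then z (j + k2) else 0,
     \<lambda>j. if j < k2 then z (j + k1) else if j < n2 then z (j + n1) else 0)"

lemma interleave_image_euclid_prod:
  assumes "X \<subseteq> euclid k1" and "Y \<subseteq> euclid k2"
  shows "interleave k1 k2 n1 ` (X \<times> Y) = euclid_prod k1 X Y"
proof -
  have "interleave k1 k2 n1 (x, y) = (\<lambda>i. if i < k1 then x i else y (i - k1))"
    if "x \<in> X" "y \<in> Y" for x y
    using that assms by (auto simp: euclid_def interleave_def subset_iff intro!: ext)
  then show ?thesis by (auto simp: euclid_prod_def image_iff) (metis SigmaI)
qed

lemma sum_interleave:
  fixes a b :: "nat \<Rightarrow> 'a::comm_monoid_add"
  assumes "k1 \<le> n1" "k2 \<le> n2"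
  shows "sum (interleave k1 k2 n1 (a, b)) {..<n1 + n2} = sum a {..<n1} + sum b {..<n2}"
proof -
  let ?c = "interleave k1 k2 n1 (a, b)"
  have "sum ?c {..<n1 + n2} =
      sum ?c {0..<k1} + sum ?c {k1..<k1 + k2} + sum ?c {k1 + k2..<n1 + k2} + sum ?c {n1 + k2..<n1 + n2}"
    using assms by (simp add: lessThan_atLeast0 sum.atLeastLessThan_concat)
  also have "sum ?c {0..<k1} = sum a {0..<k1}"
    by (rule sum.cong) (auto simp: interleave_def)
  also have "sum ?c {k1..<k1 + k2} = sum b {0..<k2}"
    using sum.shift_bounds_nat_ivl[of ?c 0 k1 k2]
    by (simp add: add.commute interleave_def)
  also have "sum ?c {k1 + k2..<n1 + k2} = sum a {k1..<n1}"
    using sum.shift_bounds_nat_ivl[of ?c k1 k2 n1]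
    by (simp add: interleave_def)
  also have "sum ?c {n1 + k2..<n1 + n2} = sum b {k2..<n2}"
    using sum.shift_bounds_nat_ivl[of ?c k2 n1 n2] assms
    by (simp add: add.commute interleave_def)
  also have "sum a {0..<k1} + sum b {0..<k2} + sum a {k1..<n1} + sum b {k2..<n2}
      = (sum a {0..<k1} + sum a {k1..<n1}) + (sum b {0..<k2} + sum b {k2..<n2})"
    by (simp add: add_ac)
  finally show ?thesis
    using assms by (simp add: lessThan_atLeast0 sum.atLeastLessThan_concat)
qed

context
  fixes k1 k2 n1 n2 :: nat
  assumes le1: "k1 \<le> n1" and le2: "k2 \<le> n2"
begin

lemma interleave_in_euclid:
  "u \<in> euclid n1 \<times> euclid n2 \<Longrightarrow> interleave k1 k2 n1 u \<in> euclid (n1 + n2)"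
  using le1 le2 by (auto simp: euclid_def interleave_def)

lemma deinterleave_in_euclid: "deinterleave k1 k2 n1 n2 z \<in> euclid n1 \<times> euclid n2"
  using le1 le2 by (auto simp: euclid_def deinterleave_def)

lemma deinterleave_interleave:
  "u \<in> euclid n1 \<times> euclid n2 \<Longrightarrow> deinterleave k1 k2 n1 n2 (interleave k1 k2 n1 u) = u"
  using le1 le2 by (auto simp: euclid_def interleave_def deinterleave_def intro!: ext)

lemma interleave_deinterleave:
  "z \<in> euclid (n1 + n2) \<Longrightarrow> interleave k1 k2 n1 (deinterleave k1 k2 n1 n2 z) = z"
  using le1 le2 by (auto simp: euclid_def interleave_def deinterleave_def intro!: ext)

lemma edist_interleave:
  "edist (n1 + n2) (interleave k1 k2 n1 u) (interleave k1 k2 n1 v) = prod_dist (edist n1) (edist n2) u v"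
proof -
  obtain a b a' b' where u: "u = (a, b)" and v: "v = (a', b')" by fastforce
  have "(\<lambda>i. (interleave k1 k2 n1 u i - interleave k1 k2 n1 v i)\<^sup>2)
      = interleave k1 k2 n1 (\<lambda>j. (a j - a' j)\<^sup>2, \<lambda>j. (b j - b' j)\<^sup>2)"
    by (auto simp: u v interleave_def)
  then have "(\<Sum>i<n1 + n2. (interleave k1 k2 n1 u i - interleave k1 k2 n1 v i)\<^sup>2)
      = (\<Sum>j<n1. (a j - a' j)\<^sup>2) + (\<Sum>j<n2. (b j - b' j)\<^sup>2)"
    using sum_interleave[OF le1 le2] by metis
  then show ?thesis
    by (simp add: edist_def prod_dist_def u v sum_nonneg)
qed

definition interleaved_action ::
  "('g1 \<Rightarrow> (nat \<Rightarrow> real) \<Rightarrow> (nat \<Rightarrow> real)) \<Rightarrow> ('g2 \<Rightarrow> (nat \<Rightarrow> real) \<Rightarrow> (nat \<Rightarrow> real)) \<Rightarrow>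
    ('h \<Rightarrow> 'g1 \<times> 'g2) \<Rightarrow> 'h \<Rightarrow> (nat \<Rightarrow> real) \<Rightarrow> (nat \<Rightarrow> real)"
  where "interleaved_action \<phi>1 \<phi>2 \<psi> =
    transport_action (interleave k1 k2 n1) (deinterleave k1 k2 n1 n2) (euclid (n1 + n2))
      (prod_action (euclid n1) (euclid n2) \<phi>1 \<phi>2 \<circ> \<psi>)"

lemma isometric_interleaved_action:
  assumes "isometric_action G1 n1 \<phi>1" and "isometric_action G2 n2 \<phi>2"
    and "group H" and "\<psi> \<in> hom H (G1 \<times>\<times> G2)"
  shows "isometric_action H (n1 + n2) (interleaved_action \<phi>1 \<phi>2 \<psi>)"
proof -
  let ?\<Phi> = "prod_action (euclid n1) (euclid n2) \<phi>1 \<phi>2 \<circ> \<psi>"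
  have "group_action H (euclid n1 \<times> euclid n2) ?\<Phi>"
    using assms by (intro group_action_hom_pullback[OF assms(3,4)] group_action_prod_action)
      (simp_all add: isometric_action_iff)
  moreover have "dist_preserving_action H (euclid n1 \<times> euclid n2) ?\<Phi> (prod_dist (edist n1) (edist n2))"
    using assms by (intro dist_preserving_hom_pullback[OF assms(4)] dist_preserving_prod_action)
      (simp_all add: isometric_action_iff)
  ultimately show ?thesis
    unfolding isometric_action_iff interleaved_action_def
    by (intro conjI group_action_transport[where A = "euclid n1 \<times> euclid n2"]
        dist_preserving_transport[where A = "euclid n1 \<times> euclid n2"])
      (simp_all add: interleave_in_euclid deinterleave_in_euclid deinterleave_interleave
        interleave_deinterleave edist_interleave)
qed

lemma orbit_interleaved_action:
  assumes "x1 \<in> euclid n1" and "x2 \<in> euclid n2" and "\<psi> ` carrier H = carrier (G1 \<times>\<times> G2)"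
  shows "orbit H (interleaved_action \<phi>1 \<phi>2 \<psi>) (interleave k1 k2 n1 (x1, x2))
    = interleave k1 k2 n1 ` (orbit G1 \<phi>1 x1 \<times> orbit G2 \<phi>2 x2)"
proof -
  let ?\<Phi> = "prod_action (euclid n1) (euclid n2) \<phi>1 \<phi>2"
  have "orbit H (interleaved_action \<phi>1 \<phi>2 \<psi>) (interleave k1 k2 n1 (x1, x2))
      = interleave k1 k2 n1 ` orbit H (?\<Phi> \<circ> \<psi>) (x1, x2)"
    unfolding interleaved_action_def using assms(1,2)
    by (intro orbit_transport[where A = "euclid n1 \<times> euclid n2"])
      (simp_all add: interleave_in_euclid deinterleave_in_euclid deinterleave_interleave
        interleave_deinterleave)
  also have "\<dots> = interleave k1 k2 n1 ` orbit (G1 \<times>\<times> G2) ?\<Phi> (x1, x2)"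
    by (simp only: orbit_hom_pullback[OF assms(3)])
  finally show ?thesis
    using assms(1,2) by (simp add: orbit_prod_action)
qed

lemma euclid_prod_subset_orbit:
  assumes "X \<subseteq> euclid k1" and "Y \<subseteq> euclid k2"
    and "x1 \<in> euclid n1" and "x2 \<in> euclid n2"
    and "X \<subseteq> orbit G1 \<phi>1 x1" and "Y \<subseteq> orbit G2 \<phi>2 x2"
    and "\<psi> ` carrier H = carrier (G1 \<times>\<times> G2)"
  shows "euclid_prod k1 X Y \<subseteq> orbit H (interleaved_action \<phi>1 \<phi>2 \<psi>) (interleave k1 k2 n1 (x1, x2))"
proof -
  have "euclid_prod k1 X Y = interleave k1 k2 n1 ` (X \<times> Y)"
    using assms(1,2) by (rule interleave_image_euclid_prod[symmetric])
  also have "\<dots> \<subseteq> interleave k1 k2 n1 ` (orbit G1 \<phi>1 x1 \<times> orbit G2 \<phi>2 x2)"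
    using assms(5,6) by blast
  also have "\<dots> = orbit H (interleaved_action \<phi>1 \<phi>2 \<psi>) (interleave k1 k2 n1 (x1, x2))"
    using assms(3,4,7) by (rule orbit_interleaved_action[symmetric])
  finally show ?thesis .
qed

end

theorem lemma2:
  fixes p k1 k2 :: nat and X Y :: "(nat \<Rightarrow> real) set"
  assumes "prime p"
    and "X \<subseteq> euclid k1" and "Y \<subseteq> euclid k2"
    and "euclidean_sub_p_toral p k1 X" and "euclidean_sub_p_toral p k2 Y"
  shows "euclidean_sub_p_toral p (k1 + k2) (euclid_prod k1 X Y)"
proof -
  obtain n1 and G1 :: "(nat \<Rightarrow> int) monoid" and \<phi>1 x1 where n1: "k1 \<le> n1"
    and G1: "p_torus p G1" and \<phi>1: "isometric_action G1 n1 \<phi>1"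
    and x1: "x1 \<in> euclid n1" and X: "X \<subseteq> orbit G1 \<phi>1 x1"
    using assms(4) unfolding euclidean_sub_p_toral_def by blast
  obtain n2 and G2 :: "(nat \<Rightarrow> int) monoid" and \<phi>2 x2 where n2: "k2 \<le> n2"
    and G2: "p_torus p G2" and \<phi>2: "isometric_action G2 n2 \<phi>2"
    and x2: "x2 \<in> euclid n2" and Y: "Y \<subseteq> orbit G2 \<phi>2 x2"
    using assms(5) unfolding euclidean_sub_p_toral_def by blast
  obtain \<alpha> :: nat and \<psi> where \<alpha>: "\<alpha> \<ge> 1"
    and \<psi>: "\<psi> \<in> iso (product_group {..<\<alpha>} (\<lambda>_. integer_mod_group p)) (G1 \<times>\<times> G2)"
    using p_torus_DirProd_iso[OF G1 G2] .
  let ?\<Phi> = "interleaved_action k1 k2 n1 n2 \<phi>1 \<phi>2 \<psi>"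
  have "isometric_action (product_group {..<\<alpha>} (\<lambda>_. integer_mod_group p)) (n1 + n2) ?\<Phi>"
    using n1 n2 \<phi>1 \<phi>2 \<psi> by (simp add: isometric_interleaved_action iso_imp_homomorphism)
  moreover have "euclid_prod k1 X Y \<subseteq> orbit (product_group {..<\<alpha>} (\<lambda>_. integer_mod_group p)) ?\<Phi>
      (interleave k1 k2 n1 (x1, x2))"
    using n1 n2 assms(2,3) x1 x2 X Y \<psi> by (simp add: euclid_prod_subset_orbit iso_iff)
  moreover have "interleave k1 k2 n1 (x1, x2) \<in> euclid (n1 + n2)"
    using n1 n2 x1 x2 by (simp add: interleave_in_euclid)
  ultimately show ?thesis
    unfolding euclidean_sub_p_toral_def using n1 n2 \<alpha> p_torus_power[of \<alpha> p]
    by (intro exI[of _ "n1 + n2"]) auto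
qed

end
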